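(* Let $\mathbb K$ be an algebraically closed field and $n\ge 1$. For every integer $\mu$ with $0\le\mu\le\lfloor n/2\rfloor$, the closure of $\mathcal P^\mu_n$ in $\mathcal P_n$ (with the topology induced by the Zariski topology of $\mathbb K[t]_n^3\cong\mathbb A^{3n+3}$) equals $\mathcal P^0_n\cup\mathcal P^1_n\cup\dots\cup\mathcal P^\mu_n$. Equivalently, for $\mu<\lfloor n/2\rfloor$, every element of $\mathcal P^\mu_n$ lies in the closure of $\mathcal P^{\mu+1}_n$.
   Context: For a field $F$ and $a,b,c\in F[t]$, $\mathrm{Syz}(a,b,c)=\{(A,B,C)\in F[t]^3: Aa+Bb+Cc=0\}$, $\deg(A,B,C)=\max\{\deg A,\deg B,\deg C\}$, and the class is $\mu(a,b,c)=\min\{\deg(A,B,C): (A,B,C)\in \mathrm{Syz}(a,b,c)\setminus\{0\}\}$. $\mathbb K[t]_n$ denotes polynomials of degree $\le n$; $\mathcal P_n\subset \mathbb K[t]_n^3$ is the set of triples $(a,b,c)$ with $c\neq 0$, $\gcd(a,b,c)=1$ and $\max\{\deg a,\deg b,\deg c\}=n$; $\mathcal P^\mu_n=\{(a,b,c)\in\mathcal P_n:\mu(a,b,c)=\mu\}$. It is known that $\mathcal P_n=\mathcal P^0_n\cup\dots\cup\mathcal P^{\lfloor n/2\rfloor}_n$. *)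

theory Defs
  imports "HOL-Computational_Algebra.Polynomial"
begin

type_synonym 'a triple = "'a poly \<times> 'a poly \<times> 'a poly"

definition Syz :: "'a::comm_ring_1 poly \<Rightarrow> 'a poly \<Rightarrow> 'a poly \<Rightarrow> 'a triple set" where
  "Syz a b c = {(A, B, C). A * a + B * b + C * c = 0}"

definition tdeg :: "'a::zero triple \<Rightarrow> nat" where
  "tdeg x = (case x of (A, B, C) \<Rightarrow> max (degree A) (max (degree B) (degree C)))"

definition mu :: "'a::comm_ring_1 poly \<Rightarrow> 'a poly \<Rightarrow> 'a poly \<Rightarrow> nat" where
  "mu a b c = (LEAST d. \<exists>s \<in> Syz a b c - {(0, 0, 0)}. tdeg s = d)"

definition Kn3 :: "nat \<Rightarrow> 'a::zero triple set" where
  "Kn3 n = {(a, b, c). degree a \<le> n \<and> degree b \<le> n \<and> degree c \<le> n}"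

definition coprime3 :: "'a::field poly \<Rightarrow> 'a poly \<Rightarrow> 'a poly \<Rightarrow> bool" where
  "coprime3 a b c \<longleftrightarrow> (\<forall>d. d dvd a \<and> d dvd b \<and> d dvd c \<longrightarrow> is_unit d)"

definition Pn :: "nat \<Rightarrow> 'a::field triple set" where
  "Pn n = {(a, b, c). c \<noteq> 0 \<and> coprime3 a b c \<and> max (degree a) (max (degree b) (degree c)) = n}"

definition Pmu :: "nat \<Rightarrow> nat \<Rightarrow> 'a::field triple set" where
  "Pmu n m = {(a, b, c) \<in> Pn n. mu a b c = m}"

text \<open>Polynomial functions on K[t]_n^3 = A^(3n+3), in the coordinates given by the
  coefficients of a, b, c of index 0..n.\<close>
inductive_set polyfun :: "nat \<Rightarrow> ('a::comm_ring_1 triple \<Rightarrow> 'a) set" for n where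
  const: "(\<lambda>_. k) \<in> polyfun n"
| coord_a: "i \<le> n \<Longrightarrow> (\<lambda>(a, b, c). coeff a i) \<in> polyfun n"
| coord_b: "i \<le> n \<Longrightarrow> (\<lambda>(a, b, c). coeff b i) \<in> polyfun n"
| coord_c: "i \<le> n \<Longrightarrow> (\<lambda>(a, b, c). coeff c i) \<in> polyfun n"
| add: "f \<in> polyfun n \<Longrightarrow> g \<in> polyfun n \<Longrightarrow> (\<lambda>x. f x + g x) \<in> polyfun n"
| mult: "f \<in> polyfun n \<Longrightarrow> g \<in> polyfun n \<Longrightarrow> (\<lambda>x. f x * g x) \<in> polyfun n"

definition zariski_closed :: "nat \<Rightarrow> 'a::comm_ring_1 triple set \<Rightarrow> bool" where
  "zariski_closed n Z \<longleftrightarrow> (\<exists>F \<subseteq> polyfun n. Z = {x \<in> Kn3 n. \<forall>f \<in> F. f x = 0})"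

definition zariski_closure_in :: "nat \<Rightarrow> 'a::comm_ring_1 triple set \<Rightarrow> 'a triple set \<Rightarrow> 'a triple set" where
  "zariski_closure_in n Y S = \<Inter> {Y \<inter> Z | Z. zariski_closed n Z \<and> S \<subseteq> Y \<inter> Z}"

end

(* Having a nonzero syzygy of degree at most d is a rank condition on a Sylvester-type matrix of
   coefficients, hence Zariski closed; since mu(a,b,c) <= d exactly when such a syzygy exists, the
   closure of P^mu_n lies in the union of P^0_n, ..., P^mu_n.

   Conversely, a triple x of class i <= mu is a cross product p x q with deg p = i and
   deg q <= n - i: p is a syzygy of minimal degree, its entries generate the unit ideal, and q is
   reduced modulo p. Writing q = t^(mu - i) w + r with deg r < mu - i, every point of the line
   s |-> x + s (r x w) other than x is a cross product p' x q' with deg p' <= mu and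
   deg q' <= n - mu. Each such product lies on a line through (t^n, 1, t^mu), a point of class mu,
   and all but finitely many points of that line have class mu. As K is infinite, a polynomial
   function vanishing at all but finitely many points of a line vanishes on the whole line. *)
theory Submission
  imports Defs "Jordan_Normal_Form.Determinant" "HOL-Library.Function_Algebras"
    "HOL-Library.Product_Plus"
begin

section \<open>Linear dependence of columns\<close>

definition lin_dep_cols :: "(nat \<Rightarrow> nat \<Rightarrow> 'a::field) \<Rightarrow> nat \<Rightarrow> nat \<Rightarrow> bool" where
  "lin_dep_cols M N k \<longleftrightarrow> (\<exists>c. (\<exists>j<k. c j \<noteq> 0) \<and> (\<forall>r<N. (\<Sum>j<k. M r j * c j) = 0))"

lemma sum_fun_apply: "(\<Sum>x\<in>A. f x) i = (\<Sum>x\<in>A. f x i)"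
  by (induction A rule: infinite_finite_induct) auto

interpretation fun_vs: vector_space "\<lambda>(c::'a::field) (v::nat \<Rightarrow> 'a) i. c * v i"
  by unfold_locales (auto simp: algebra_simps)

lemma left_inverse_if_not_lin_dep_cols:
  fixes M :: "nat \<Rightarrow> nat \<Rightarrow> 'a::field"
  assumes "\<not> lin_dep_cols M N k"
  obtains L where "\<And>i j. i < k \<Longrightarrow> j < k \<Longrightarrow> (\<Sum>r<N. L i r * M r j) = (if i = j then 1 else 0)"
proof -
  let ?s = "\<lambda>(c::'a) (v::nat \<Rightarrow> 'a) i. c * v i"
  interpret vector_space_pair ?s ?s ..
  define f where "f c = (\<lambda>r. if r < N then \<Sum>j<k. M r j * c j else 0)" for c :: "nat \<Rightarrow> 'a"
  define V where "V = {c :: nat \<Rightarrow> 'a. \<forall>j\<ge>k. c j = 0}"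
  have lin: "Vector_Spaces.linear ?s ?s f"
    by unfold_locales
      (simp_all add: f_def fun_eq_iff distrib_left sum.distrib sum_distrib_left mult.left_commute)
  have "fun_vs.subspace V"
    unfolding fun_vs.subspace_def V_def by auto
  moreover have "inj_on f V"
  proof -
    have "c = 0" if "c \<in> V" "f c = 0" for c
    proof (rule ccontr)
      assume "c \<noteq> 0"
      then have "\<exists>j<k. c j \<noteq> 0"
        using \<open>c \<in> V\<close> by (auto simp: V_def fun_eq_iff) (meson not_less)
      moreover have "\<forall>r<N. (\<Sum>j<k. M r j * c j) = 0"
        using \<open>f c = 0\<close> by (auto simp: f_def fun_eq_iff split: if_splits)
      ultimately show False
        using assms unfolding lin_dep_cols_def by blast
    qed
    then show ?thesis
      using linear_inj_on_iff_eq_0[OF lin \<open>fun_vs.subspace V\<close>] by blast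
  qed
  ultimately obtain g where g: "Vector_Spaces.linear ?s ?s g" "\<And>v. v \<in> V \<Longrightarrow> g (f v) = v"
    using linear_exists_left_inverse_on[OF lin] by blast
  define \<delta> :: "nat \<Rightarrow> nat \<Rightarrow> 'a" where "\<delta> r = (\<lambda>i. if i = r then 1 else 0)" for r
  show thesis
  proof
    fix i j assume "i < k" "j < k"
    have "f (\<delta> j) = (\<Sum>r<N. ?s (M r j) (\<delta> r))"
      using \<open>j < k\<close>
      by (simp add: f_def \<delta>_def fun_eq_iff sum_fun_apply if_distrib[of "\<lambda>x. _ * x"] cong: if_cong)
    then have "g (f (\<delta> j)) = (\<Sum>r<N. ?s (M r j) (g (\<delta> r)))"
      using g(1) by (simp add: linear_sum linear_scale)
    moreover have "g (f (\<delta> j)) = \<delta> j"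
      using g(2) \<open>j < k\<close> by (simp add: V_def \<delta>_def)
    ultimately show "(\<Sum>r<N. g (\<delta> r) i * M r j) = (if i = j then 1 else 0)"
      by (simp add: fun_eq_iff \<delta>_def mult.commute sum_fun_apply)
  qed
qed

lemma det_left_mult_eq_0_if_lin_dep_cols:
  fixes M :: "nat \<Rightarrow> nat \<Rightarrow> 'a::field"
  assumes "lin_dep_cols M N k"
  shows "det (mat k k (\<lambda>(i, j). \<Sum>r<N. L i r * M r j)) = 0"
proof -
  let ?A = "mat k k (\<lambda>(i, j). \<Sum>r<N. L i r * M r j)"
  obtain c where c: "\<exists>j<k. c j \<noteq> 0" "\<forall>r<N. (\<Sum>j<k. M r j * c j) = 0"
    using assms unfolding lin_dep_cols_def by blast
  have "vec k c \<noteq> 0\<^sub>v k"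
    using c(1) by (metis index_vec index_zero_vec(1))
  moreover have "?A *\<^sub>v vec k c = 0\<^sub>v k"
  proof (rule eq_vecI)
    fix i assume "i < dim_vec (0\<^sub>v k)"
    then have "(?A *\<^sub>v vec k c) $ i = (\<Sum>j<k. (\<Sum>r<N. L i r * M r j) * c j)"
      by (auto simp: scalar_prod_def lessThan_atLeast0 intro!: sum.cong)
    also have "\<dots> = (\<Sum>r<N. L i r * (\<Sum>j<k. M r j * c j))"
      by (simp add: sum_distrib_left sum_distrib_right mult.assoc sum.swap[of _ "{..<k}"])
    finally show "(?A *\<^sub>v vec k c) $ i = 0\<^sub>v k $ i"
      using c(2) \<open>i < dim_vec (0\<^sub>v k)\<close> by simp
  qed simp
  ultimately show ?thesis
    using det_0_iff_vec_prod_zero_field[OF mat_carrier] vec_carrier[of k c] by blast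
qed

lemma lin_dep_cols_iff_det:
  fixes M :: "nat \<Rightarrow> nat \<Rightarrow> 'a::field"
  shows "lin_dep_cols M N k \<longleftrightarrow> (\<forall>L. det (mat k k (\<lambda>(i, j). \<Sum>r<N. L i r * M r j)) = 0)"
proof (intro iffI allI det_left_mult_eq_0_if_lin_dep_cols)
  assume det: "\<forall>L. det (mat k k (\<lambda>(i, j). \<Sum>r<N. L i r * M r j)) = 0"
  show "lin_dep_cols M N k"
  proof (rule ccontr)
    assume "\<not> lin_dep_cols M N k"
    then obtain L where "\<And>i j. i < k \<Longrightarrow> j < k \<Longrightarrow> (\<Sum>r<N. L i r * M r j) = (if i = j then 1 else 0)"
      using left_inverse_if_not_lin_dep_cols by metis
    then have "mat k k (\<lambda>(i, j). \<Sum>r<N. L i r * M r j) = 1\<^sub>m k"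
      by (intro eq_matI) auto
    then show False
      using det[rule_format, of L] by simp
  qed
qed

section \<open>Polynomial functions and Zariski closed sets\<close>

definition polyfun_on :: "nat \<Rightarrow> ('a::comm_ring_1 triple \<Rightarrow> 'a) \<Rightarrow> bool" where
  "polyfun_on n f \<longleftrightarrow> (\<exists>g \<in> polyfun n. \<forall>x \<in> Kn3 n. f x = g x)"

lemma polyfun_on_polyfun: "f \<in> polyfun n \<Longrightarrow> polyfun_on n f"
  unfolding polyfun_on_def by (intro bexI[of _ f]) simp_all

lemma polyfun_on_const: "polyfun_on n (\<lambda>_. k)"
  by (rule polyfun_on_polyfun) (rule polyfun.const)

lemma polyfun_on_add:
  assumes "polyfun_on n f" "polyfun_on n g"
  shows "polyfun_on n (\<lambda>x. f x + g x)"
proof -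
  obtain f' g' where "f' \<in> polyfun n" "g' \<in> polyfun n"
    and "\<forall>x \<in> Kn3 n. f x = f' x" "\<forall>x \<in> Kn3 n. g x = g' x"
    using assms unfolding polyfun_on_def by blast
  then show ?thesis
    unfolding polyfun_on_def by (intro bexI[of _ "\<lambda>x. f' x + g' x"] polyfun.add) simp_all
qed

lemma polyfun_on_mult:
  assumes "polyfun_on n f" "polyfun_on n g"
  shows "polyfun_on n (\<lambda>x. f x * g x)"
proof -
  obtain f' g' where "f' \<in> polyfun n" "g' \<in> polyfun n"
    and "\<forall>x \<in> Kn3 n. f x = f' x" "\<forall>x \<in> Kn3 n. g x = g' x"
    using assms unfolding polyfun_on_def by blast
  then show ?thesis
    unfolding polyfun_on_def by (intro bexI[of _ "\<lambda>x. f' x * g' x"] polyfun.mult) simp_all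
qed

lemma polyfun_on_sum:
  "finite S \<Longrightarrow> (\<And>i. i \<in> S \<Longrightarrow> polyfun_on n (f i)) \<Longrightarrow> polyfun_on n (\<lambda>x. \<Sum>i\<in>S. f i x)"
  by (induction S rule: finite_induct) (simp_all add: polyfun_on_const polyfun_on_add)

lemma polyfun_on_prod:
  "finite S \<Longrightarrow> (\<And>i. i \<in> S \<Longrightarrow> polyfun_on n (f i)) \<Longrightarrow> polyfun_on n (\<lambda>x. \<Prod>i\<in>S. f i x)"
  by (induction S rule: finite_induct) (simp_all add: polyfun_on_const polyfun_on_mult)

lemma polyfun_on_det:
  assumes "\<And>i j. i < k \<Longrightarrow> j < k \<Longrightarrow> polyfun_on n (E i j)"
  shows "polyfun_on n (\<lambda>x. det (mat k k (\<lambda>(i, j). E i j x)))"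
proof -
  have "det (mat k k (\<lambda>(i, j). E i j x)) =
      (\<Sum>p \<in> {p. p permutes {0..<k}}. signof p * (\<Prod>i\<in>{0..<k}. E i (p i) x))" for x
    by (subst det_def'[of _ k]) (auto intro!: sum.cong prod.cong simp: permutes_in_image)
  moreover have
    "polyfun_on n (\<lambda>x. \<Sum>p \<in> {p. p permutes {0..<k}}. signof p * (\<Prod>i\<in>{0..<k}. E i (p i) x))"
  proof (intro polyfun_on_sum polyfun_on_mult polyfun_on_const polyfun_on_prod)
    fix p i assume "p \<in> {p. p permutes {0..<k}}" "i \<in> {0..<k}"
    then show "polyfun_on n (E i (p i))"
      using assms by (simp add: permutes_in_image)
  qed (simp_all add: finite_permutations)
  ultimately show ?thesis
    by simp
qed

definition component :: "'b \<times> 'b \<times> 'b \<Rightarrow> nat \<Rightarrow> 'b" where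
  "component x l = (case x of (a, b, c) \<Rightarrow> if l = 0 then a else if l = 1 then b else c)"

lemma component_simps [simp]:
  "component (a, b, c) 0 = a" "component (a, b, c) 1 = b" "component (a, b, c) 2 = c"
  by (simp_all add: component_def)

lemma degree_component: "x \<in> Kn3 n \<Longrightarrow> degree (component x l) \<le> n"
  by (auto simp: Kn3_def component_def)

lemma polyfun_on_coeff: "polyfun_on n (\<lambda>x. coeff (component x l) i)"
proof (cases "i \<le> n")
  case True
  consider "l = 0" | "l = 1" | "l \<noteq> 0" "l \<noteq> 1"
    by blast
  then have "(\<lambda>x. coeff (component x l) i) \<in> polyfun n"
    by cases
      (use polyfun.intros(2-4)[OF True, unfolded case_prod_beta]
        in \<open>simp_all add: component_def case_prod_beta\<close>)
  then show ?thesis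
    by (rule polyfun_on_polyfun)
next
  case False
  have "coeff (component x l) i = 0" if "x \<in> Kn3 n" for x
    using degree_component[OF that, of l] False by (intro coeff_eq_0) simp
  then have "\<forall>x \<in> Kn3 n. coeff (component x l) i = 0"
    by blast
  then show ?thesis
    unfolding polyfun_on_def by (intro bexI[OF _ polyfun.const[of 0]])
qed

lemma zariski_closed_zero_set:
  assumes "\<And>f. f \<in> F \<Longrightarrow> polyfun_on n f"
  shows "zariski_closed n {x \<in> Kn3 n. \<forall>f \<in> F. f x = 0}"
proof -
  obtain g where g: "\<And>f. f \<in> F \<Longrightarrow> g f \<in> polyfun n \<and> (\<forall>x \<in> Kn3 n. f x = g f x)"
    using assms unfolding polyfun_on_def by metis
  then have "{x \<in> Kn3 n. \<forall>f \<in> F. f x = 0} = {x \<in> Kn3 n. \<forall>h \<in> g ` F. h x = 0}"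
    by auto
  moreover have "g ` F \<subseteq> polyfun n"
    using g by blast
  ultimately show ?thesis
    unfolding zariski_closed_def by blast
qed

lemma zariski_closed_coeff_eq_0:
  "zariski_closed n {x :: 'a::comm_ring_1 triple \<in> Kn3 n. coeff (component x l) i = 0}"
proof -
  have "zariski_closed n {x :: 'a triple \<in> Kn3 n. \<forall>f \<in> {\<lambda>x. coeff (component x l) i}. f x = 0}"
    by (rule zariski_closed_zero_set) (simp add: polyfun_on_coeff)
  then show ?thesis
    by simp
qed

lemma zariski_closed_lin_dep_cols:
  fixes M :: "'a::field triple \<Rightarrow> nat \<Rightarrow> nat \<Rightarrow> 'a"
  assumes "\<And>r j. polyfun_on n (\<lambda>x. M x r j)"
  shows "zariski_closed n {x \<in> Kn3 n. lin_dep_cols (M x) N k}"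
proof -
  let ?F = "range (\<lambda>L x. det (mat k k (\<lambda>(i, j). \<Sum>r<N. L i r * M x r j)))"
  have "{x \<in> Kn3 n. lin_dep_cols (M x) N k} = {x \<in> Kn3 n. \<forall>f \<in> ?F. f x = 0}"
    by (auto simp: lin_dep_cols_iff_det)
  moreover have "polyfun_on n f" if "f \<in> ?F" for f
  proof -
    obtain L where "f = (\<lambda>x. det (mat k k (\<lambda>(i, j). \<Sum>r<N. L i r * M x r j)))"
      using \<open>f \<in> ?F\<close> by blast
    moreover have "polyfun_on n (\<lambda>x. \<Sum>r<N. L i r * M x r j)" for i j
      by (intro polyfun_on_sum polyfun_on_mult polyfun_on_const assms) simp
    ultimately show ?thesis
      using polyfun_on_det[of k n "\<lambda>i j x. \<Sum>r<N. L i r * M x r j"] by simp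
  qed
  ultimately show ?thesis
    using zariski_closed_zero_set[of ?F n] by simp
qed

lemma Pn_subset_Kn3: "Pn n \<subseteq> Kn3 n"
  unfolding Pn_def Kn3_def by auto

lemma zariski_closure_in_subset:
  "zariski_closed n Z \<Longrightarrow> S \<subseteq> Y \<inter> Z \<Longrightarrow> zariski_closure_in n Y S \<subseteq> Y \<inter> Z"
  unfolding zariski_closure_in_def by blast

lemma mem_zariski_closure_inI:
  "y \<in> Y \<Longrightarrow> (\<And>Z. zariski_closed n Z \<Longrightarrow> S \<subseteq> Z \<Longrightarrow> y \<in> Z) \<Longrightarrow> y \<in> zariski_closure_in n Y S"
  unfolding zariski_closure_in_def by blast

section \<open>Syzygies of bounded degree\<close>

definition has_syz :: "nat \<Rightarrow> nat \<Rightarrow> (nat \<Rightarrow> 'a::comm_ring_1 poly) \<Rightarrow> bool" where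
  "has_syz d J ys \<longleftrightarrow>
     (\<exists>As. (\<forall>l<J. degree (As l) \<le> d) \<and> (\<exists>l<J. As l \<noteq> 0) \<and> (\<Sum>l<J. As l * ys l) = 0)"

(* Column u + l * (d + 1) holds the coefficients of t^u * ys l, so that the vectors of column
   coefficients correspond to the tuples As of multipliers of degree at most d. *)
definition syz_matrix :: "nat \<Rightarrow> (nat \<Rightarrow> 'a::comm_ring_1 poly) \<Rightarrow> nat \<Rightarrow> nat \<Rightarrow> 'a" where
  "syz_matrix d ys r j = coeff (monom 1 (j mod Suc d) * ys (j div Suc d)) r"

lemma sum_mult_product:
  "(\<Sum>j < A * B. h j) = (\<Sum>i<A. \<Sum>j<B. h (j + i * B))" for A B :: nat
proof -
  have "(\<Sum>j<B. h (j + i * B)) = (\<Sum>j \<in> {i * B..<i * B + B}. h j)" for i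
    by (rule sum.reindex_bij_witness[where i = "\<lambda>j. j - i * B" and j = "\<lambda>j. j + i * B"]) auto
  then show ?thesis
    using sum.nat_group[of h B A] by (simp add: lessThan_atLeast0)
qed

lemma degree_mult_le_add: "degree p \<le> m \<Longrightarrow> degree q \<le> k \<Longrightarrow> degree (p * q) \<le> m + k"
  using degree_mult_le[of p q] by simp

lemma coeff_mult_monom_sum:
  fixes A y :: "'a::comm_ring_1 poly"
  assumes "degree A \<le> d"
  shows "coeff (A * y) r = (\<Sum>u<Suc d. coeff (monom 1 u * y) r * coeff A u)"
proof -
  have "coeff (A * y) r = (\<Sum>u\<le>d. coeff (monom (coeff A u) u * y) r)"
    by (subst poly_as_sum_of_monoms'[OF assms, symmetric]) (simp only: sum_distrib_right coeff_sum)
  also have "\<dots> = (\<Sum>u<Suc d. coeff (monom 1 u * y) r * coeff A u)"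
    unfolding lessThan_Suc_atMost by (intro sum.cong refl) (simp add: coeff_monom_mult)
  finally show ?thesis .
qed

lemma syz_matrix_mult:
  assumes "\<And>l. l < J \<Longrightarrow> degree (As l) \<le> d"
    and "\<And>l u. l < J \<Longrightarrow> u \<le> d \<Longrightarrow> c (u + l * Suc d) = coeff (As l) u"
  shows "(\<Sum>j < J * Suc d. syz_matrix d ys r j * c j) = coeff (\<Sum>l<J. As l * ys l) r"
proof -
  have "(\<Sum>j < J * Suc d. syz_matrix d ys r j * c j)
      = (\<Sum>l<J. \<Sum>u<Suc d. coeff (monom 1 u * ys l) r * coeff (As l) u)"
    unfolding sum_mult_product syz_matrix_def using assms(2)
    by (intro sum.cong refl) (simp del: mult_Suc_right)
  also have "\<dots> = (\<Sum>l<J. coeff (As l * ys l) r)"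
    using assms(1) by (intro sum.cong refl coeff_mult_monom_sum[symmetric]) simp
  finally show ?thesis
    by (simp add: coeff_sum)
qed

lemma lin_dep_cols_syz_matrix_if_has_syz:
  assumes "has_syz d J ys"
  shows "lin_dep_cols (syz_matrix d ys) N (J * Suc d)"
proof -
  obtain As where As: "\<And>l. l < J \<Longrightarrow> degree (As l) \<le> d" "\<exists>l<J. As l \<noteq> 0"
    "(\<Sum>l<J. As l * ys l) = 0"
    using assms unfolding has_syz_def by blast
  define c where "c j = coeff (As (j div Suc d)) (j mod Suc d)" for j
  obtain l where l: "l < J" "As l \<noteq> 0"
    using As(2) by blast
  have "degree (As l) + l * Suc d < Suc d + l * Suc d"
    using As(1)[OF l(1)] by simp
  also have "\<dots> \<le> J * Suc d"
    using l(1) mult_le_mono1[of "Suc l" J "Suc d"] by simp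
  finally have "degree (As l) + l * Suc d < J * Suc d" .
  moreover have "c (degree (As l) + l * Suc d) \<noteq> 0"
    using As(1)[OF l(1)] l(2) by (simp add: c_def del: mult_Suc_right)
  moreover have "(\<Sum>j < J * Suc d. syz_matrix d ys r j * c j) = 0" for r
    using syz_matrix_mult[of J As d c ys r] As(1,3) by (simp add: c_def del: mult_Suc_right)
  ultimately show ?thesis
    unfolding lin_dep_cols_def by blast
qed

lemma has_syz_if_lin_dep_cols_syz_matrix:
  fixes ys :: "nat \<Rightarrow> 'a::field poly"
  assumes deg: "\<And>l. l < J \<Longrightarrow> degree (ys l) \<le> n"
    and "lin_dep_cols (syz_matrix d ys) (n + d + 1) (J * Suc d)"
  shows "has_syz d J ys"
proof -
  obtain c where c: "\<exists>j < J * Suc d. c j \<noteq> 0"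
    "\<And>r. r < n + d + 1 \<Longrightarrow> (\<Sum>j < J * Suc d. syz_matrix d ys r j * c j) = 0"
    using assms(2) unfolding lin_dep_cols_def by blast
  define As where "As l = (\<Sum>u\<le>d. monom (c (u + l * Suc d)) u)" for l
  have coeff_As: "coeff (As l) u = (if u \<le> d then c (u + l * Suc d) else 0)" for l u
    by (simp add: As_def coeff_sum coeff_monom)
  have deg_As: "degree (As l) \<le> d" for l
    by (rule degree_le) (simp add: coeff_As)
  obtain j where "j < J * Suc d" "c j \<noteq> 0"
    using c(1) by blast
  have "j mod Suc d \<le> d"
    using mod_less_divisor[of "Suc d" j] by linarith
  then have "coeff (As (j div Suc d)) (j mod Suc d) \<noteq> 0"
    using \<open>c j \<noteq> 0\<close> by (simp only: coeff_As if_True mod_div_mult_eq not_False_eq_True)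
  moreover have "j div Suc d < J"
    using \<open>j < J * Suc d\<close> by (rule less_mult_imp_div_less)
  moreover have "coeff (\<Sum>l<J. As l * ys l) r = 0" for r
  proof (cases "r < n + d + 1")
    case True
    then show ?thesis
      using syz_matrix_mult[of J As d c ys r] c(2) deg_As by (simp add: coeff_As)
  next
    case False
    have "degree (As l * ys l) \<le> d + n" if "l < J" for l
      using degree_mult_le_add[OF deg_As deg[OF that]] .
    then have "degree (\<Sum>l<J. As l * ys l) \<le> d + n"
      by (intro degree_sum_le) simp_all
    then show ?thesis
      using False by (simp add: coeff_eq_0)
  qed
  ultimately show ?thesis
    unfolding has_syz_def using deg_As by (metis coeff_0 poly_eqI)
qed

lemma has_syz_iff_lin_dep_cols:
  fixes ys :: "nat \<Rightarrow> 'a::field poly"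
  assumes "\<And>l. l < J \<Longrightarrow> degree (ys l) \<le> n"
  shows "has_syz d J ys \<longleftrightarrow> lin_dep_cols (syz_matrix d ys) (n + d + 1) (J * Suc d)"
  using assms has_syz_if_lin_dep_cols_syz_matrix lin_dep_cols_syz_matrix_if_has_syz by blast

lemma zariski_closed_has_syz:
  "zariski_closed n {x :: 'a::field triple \<in> Kn3 n. has_syz d J (component x)}"
proof -
  have eq: "{x \<in> Kn3 n. has_syz d J (component x)} =
      {x \<in> Kn3 n. lin_dep_cols (syz_matrix d (component x)) (n + d + 1) (J * Suc d)}"
    by (auto simp: has_syz_iff_lin_dep_cols[OF degree_component])
  moreover have "polyfun_on n (\<lambda>x :: 'a triple. syz_matrix d (component x) r j)" for r j
  proof (cases "j mod Suc d \<le> r")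
    case True
    then show ?thesis
      using polyfun_on_coeff by (simp add: syz_matrix_def coeff_monom_mult)
  next
    case False
    then show ?thesis
      using polyfun_on_const by (simp add: syz_matrix_def coeff_monom_mult)
  qed
  then show ?thesis
    unfolding eq by (rule zariski_closed_lin_dep_cols)
qed

lemma tdeg_le_iff: "tdeg (A, B, C) \<le> d \<longleftrightarrow> degree A \<le> d \<and> degree B \<le> d \<and> degree C \<le> d"
  by (simp add: tdeg_def)

lemma has_syz_3_iff:
  "has_syz d 3 (component (a, b, c)) \<longleftrightarrow> (\<exists>s \<in> Syz a b c - {(0, 0, 0)}. tdeg s \<le> d)"
proof
  assume "has_syz d 3 (component (a, b, c))"
  then obtain As where "\<forall>l<3. degree (As l) \<le> d" "\<exists>l<3. As l \<noteq> 0"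
    "(\<Sum>l<3. As l * component (a, b, c) l) = 0"
    unfolding has_syz_def by blast
  then have "(As 0, As 1, As 2) \<in> Syz a b c - {(0, 0, 0)}" "tdeg (As 0, As 1, As 2) \<le> d"
    by (auto simp: Syz_def tdeg_le_iff eval_nat_numeral less_Suc_eq component_def)
  then show "\<exists>s \<in> Syz a b c - {(0, 0, 0)}. tdeg s \<le> d"
    by blast
next
  assume "\<exists>s \<in> Syz a b c - {(0, 0, 0)}. tdeg s \<le> d"
  then obtain A B C where "(A, B, C) \<in> Syz a b c - {(0, 0, 0)}" "tdeg (A, B, C) \<le> d"
    by auto
  then show "has_syz d 3 (component (a, b, c))"
    unfolding has_syz_def
    by (intro exI[of _ "component (A, B, C)"])
       (auto simp: Syz_def tdeg_le_iff eval_nat_numeral less_Suc_eq component_def)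
qed

lemma has_syz_2_iff:
  "has_syz d 2 (component (a, b, c)) \<longleftrightarrow>
     (\<exists>A B. (A, B) \<noteq> (0, 0) \<and> degree A \<le> d \<and> degree B \<le> d \<and> A * a + B * b = 0)"
proof
  assume "has_syz d 2 (component (a, b, c))"
  then obtain As where "\<forall>l<2. degree (As l) \<le> d" "\<exists>l<2. As l \<noteq> 0"
    "(\<Sum>l<2. As l * component (a, b, c) l) = 0"
    unfolding has_syz_def by blast
  then have "(As 0, As 1) \<noteq> (0, 0) \<and> degree (As 0) \<le> d \<and> degree (As 1) \<le> d
      \<and> As 0 * a + As 1 * b = 0"
    by (auto simp: eval_nat_numeral less_Suc_eq component_def)
  then show "\<exists>A B. (A, B) \<noteq> (0, 0) \<and> degree A \<le> d \<and> degree B \<le> d \<and> A * a + B * b = 0"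
    by blast
next
  assume "\<exists>A B. (A, B) \<noteq> (0, 0) \<and> degree A \<le> d \<and> degree B \<le> d \<and> A * a + B * b = 0"
  then obtain A B where "(A, B) \<noteq> (0, 0)" "degree A \<le> d" "degree B \<le> d" "A * a + B * b = 0"
    by blast
  then show "has_syz d 2 (component (a, b, c))"
    unfolding has_syz_def
    by (intro exI[of _ "\<lambda>l. if l = 0 then A else B"])
      (auto simp: eval_nat_numeral less_Suc_eq component_def)
qed

lemma mu_le: "s \<in> Syz a b c \<Longrightarrow> s \<noteq> (0, 0, 0) \<Longrightarrow> mu a b c \<le> tdeg s"
  unfolding mu_def by (rule Least_le) blast

lemma mu_attained:
  assumes "c \<noteq> 0"
  shows "\<exists>s \<in> Syz a b c - {(0, 0, 0)}. tdeg s = mu a b c"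
proof -
  have "(c, 0, - a) \<in> Syz a b c - {(0, 0, 0)}"
    using assms by (simp add: Syz_def mult.commute)
  then have "\<exists>d. \<exists>s \<in> Syz a b c - {(0, 0, 0)}. tdeg s = d"
    by blast
  then show ?thesis
    unfolding mu_def by (rule LeastI_ex)
qed

lemma mu_le_iff_has_syz:
  assumes "c \<noteq> 0"
  shows "mu a b c \<le> d \<longleftrightarrow> has_syz d 3 (component (a, b, c))"
  unfolding has_syz_3_iff
proof
  assume "mu a b c \<le> d"
  obtain s where "s \<in> Syz a b c - {(0, 0, 0)}" "tdeg s = mu a b c"
    using mu_attained[OF assms] by blast
  then show "\<exists>s \<in> Syz a b c - {(0, 0, 0)}. tdeg s \<le> d"
    using \<open>mu a b c \<le> d\<close> by (intro bexI[of _ s]) simp_all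
next
  assume "\<exists>s \<in> Syz a b c - {(0, 0, 0)}. tdeg s \<le> d"
  then show "mu a b c \<le> d"
    using mu_le le_trans by blast
qed

lemma zariski_closure_Pmu_subset:
  "zariski_closure_in n (Pn n :: 'a::field triple set) (Pmu n m) \<subseteq> (\<Union>i \<in> {0..m}. Pmu n i)"
proof -
  let ?Z = "{x :: 'a triple \<in> Kn3 n. has_syz m 3 (component x)}"
  have mu_le_m: "mu a b c \<le> m \<longleftrightarrow> (a, b, c) \<in> ?Z" if "(a, b, c) \<in> Pn n" for a b c
  proof -
    have "c \<noteq> 0"
      using that by (simp add: Pn_def)
    moreover have "(a, b, c) \<in> Kn3 n"
      using that Pn_subset_Kn3 by blast
    ultimately show ?thesis
      by (simp add: mu_le_iff_has_syz)
  qed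
  have "Pmu n m \<subseteq> Pn n \<inter> ?Z"
  proof clarify
    fix a b c :: "'a poly" assume "(a, b, c) \<in> Pmu n m"
    then show "(a, b, c) \<in> Pn n \<inter> ?Z"
      using mu_le_m[of a b c] by (simp add: Pmu_def)
  qed
  then have "zariski_closure_in n (Pn n) (Pmu n m) \<subseteq> Pn n \<inter> ?Z"
    by (rule zariski_closure_in_subset[OF zariski_closed_has_syz])
  also have "\<dots> \<subseteq> (\<Union>i \<in> {0..m}. Pmu n i)"
  proof
    fix x assume x: "x \<in> Pn n \<inter> ?Z"
    obtain a b c where "x = (a, b, c)"
      by (cases x)
    then have "x \<in> Pmu n (mu a b c)" "mu a b c \<le> m"
      using x mu_le_m[of a b c] by (simp_all add: Pmu_def)
    then show "x \<in> (\<Union>i \<in> {0..m}. Pmu n i)"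
      by auto
  qed
  finally show ?thesis .
qed

section \<open>Polynomial curves\<close>

definition poly_family :: "('a::comm_ring_1 \<Rightarrow> 'a poly) \<Rightarrow> bool" where
  "poly_family U \<longleftrightarrow> (\<forall>i. \<exists>P. \<forall>s. coeff (U s) i = poly P s)"

definition poly_curve :: "('a::comm_ring_1 \<Rightarrow> 'a triple) \<Rightarrow> bool" where
  "poly_curve Y \<longleftrightarrow> poly_family (\<lambda>s. fst (Y s)) \<and> poly_family (\<lambda>s. fst (snd (Y s)))
     \<and> poly_family (\<lambda>s. snd (snd (Y s)))"

lemma poly_family_affine: "poly_family (\<lambda>s. A + Polynomial.smult s B)"
  unfolding poly_family_def
proof
  fix i
  show "\<exists>P. \<forall>s. coeff (A + Polynomial.smult s B) i = poly P s"
    by (rule exI[of _ "[:coeff A i, coeff B i:]"]) (simp add: mult.commute)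
qed

lemma poly_family_diff: "poly_family U \<Longrightarrow> poly_family V \<Longrightarrow> poly_family (\<lambda>s. U s - V s)"
  unfolding poly_family_def by (metis coeff_diff poly_diff)

lemma poly_family_mult:
  assumes "poly_family U" "poly_family V"
  shows "poly_family (\<lambda>s. U s * V s)"
proof -
  obtain PU PV where "\<And>i s. coeff (U s) i = poly (PU i) s" "\<And>i s. coeff (V s) i = poly (PV i) s"
    using assms unfolding poly_family_def by metis
  then show ?thesis
    unfolding poly_family_def
    by (intro allI exI[of _ "\<Sum>j\<le>_. PU j * PV (_ - j)"]) (simp add: coeff_mult poly_sum)
qed

lemma polyfun_along_curve:
  assumes "f \<in> polyfun n" "poly_curve Y"
  shows "\<exists>P. \<forall>s. f (Y s) = poly P s"
  using assms(1)
proof induction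
  case (const k)
  show ?case
    by (intro exI[of _ "[:k:]"]) simp
next
  case (add f g)
  then show ?case
    by (metis poly_add)
next
  case (mult f g)
  then show ?case
    by (metis poly_mult)
qed (use assms(2) in \<open>auto simp: poly_curve_def poly_family_def case_prod_beta\<close>)

lemma finite_curve_in_closed:
  fixes Y :: "'a::field \<Rightarrow> 'a triple"
  assumes "zariski_closed n Z" "poly_curve Y" "Y s0 \<in> Kn3 n" "Y s0 \<notin> Z"
  shows "finite {s. Y s \<in> Z}"
proof -
  obtain F where F: "F \<subseteq> polyfun n" "Z = {x \<in> Kn3 n. \<forall>f \<in> F. f x = 0}"
    using assms(1) unfolding zariski_closed_def by blast
  then obtain f where f: "f \<in> polyfun n" "f \<in> F" "f (Y s0) \<noteq> 0"
    using assms(3,4) by blast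
  obtain P where P: "\<And>s. f (Y s) = poly P s"
    using polyfun_along_curve[OF f(1) assms(2)] by blast
  have "P \<noteq> 0"
    using f(3) P by auto
  moreover have "{s. Y s \<in> Z} \<subseteq> {s. poly P s = 0}"
    using F(2) f(2) P by auto
  ultimately show ?thesis
    using poly_roots_finite finite_subset by blast
qed

lemma alg_closed_field_infinite: "infinite (UNIV :: 'a::alg_closed_field set)"
proof
  assume fin: "finite (UNIV :: 'a set)"
  define q :: "'a poly" where "q = (\<Prod>a\<in>UNIV. [:- a, 1:])"
  have "degree q = card (UNIV :: 'a set)" "card (UNIV :: 'a set) > 0"
    using fin by (simp_all add: q_def degree_prod_eq_sum_degree card_gt_0_iff)
  then have "degree (q + 1) > 0"
    by (subst degree_add_eq_left) auto
  then obtain x where "poly (q + 1) x = 0"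
    using alg_closed_imp_poly_has_root by blast
  moreover have "poly q x = 0"
    using fin by (simp add: q_def poly_prod)
  ultimately show False
    by simp
qed

lemma curve_in_closed:
  fixes Y :: "'a::field \<Rightarrow> 'a triple"
  assumes "infinite (UNIV :: 'a set)" "zariski_closed n Z" "poly_curve Y" "Y s1 \<in> Kn3 n"
    and "finite {s. Y s \<notin> Z}"
  shows "Y s1 \<in> Z"
proof (rule ccontr)
  assume "Y s1 \<notin> Z"
  then have "finite {s. Y s \<in> Z}"
    using finite_curve_in_closed assms(2-4) by blast
  then have "finite ({s. Y s \<in> Z} \<union> {s. Y s \<notin> Z})"
    using assms(5) by blast
  moreover have "{s. Y s \<in> Z} \<union> {s. Y s \<notin> Z} = UNIV"
    by blast
  ultimately show False
    using assms(1) by simp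
qed

section \<open>Cross products of triples\<close>

definition cross :: "'b::comm_ring_1 \<times> 'b \<times> 'b \<Rightarrow> 'b \<times> 'b \<times> 'b \<Rightarrow> 'b \<times> 'b \<times> 'b" where
  "cross p q = (case p of (p1, p2, p3) \<Rightarrow> case q of (q1, q2, q3) \<Rightarrow>
     (p2 * q3 - p3 * q2, p3 * q1 - p1 * q3, p1 * q2 - p2 * q1))"

definition dot :: "'b::comm_ring_1 \<times> 'b \<times> 'b \<Rightarrow> 'b \<times> 'b \<times> 'b \<Rightarrow> 'b" where
  "dot p q = (case p of (p1, p2, p3) \<Rightarrow> case q of (q1, q2, q3) \<Rightarrow> p1 * q1 + p2 * q2 + p3 * q3)"

definition tsmult :: "'b::comm_ring_1 \<Rightarrow> 'b \<times> 'b \<times> 'b \<Rightarrow> 'b \<times> 'b \<times> 'b" where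
  "tsmult h p = (case p of (p1, p2, p3) \<Rightarrow> (h * p1, h * p2, h * p3))"

lemma cross_simps [simp]:
  "cross (p1, p2, p3) (q1, q2, q3) = (p2 * q3 - p3 * q2, p3 * q1 - p1 * q3, p1 * q2 - p2 * q1)"
  by (simp add: cross_def)

lemma dot_simps [simp]: "dot (p1, p2, p3) (q1, q2, q3) = p1 * q1 + p2 * q2 + p3 * q3"
  by (simp add: dot_def)

lemma tsmult_simps [simp]: "tsmult h (p1, p2, p3) = (h * p1, h * p2, h * p3)"
  by (simp add: tsmult_def)

lemma tsmult_0: "tsmult 0 p = (0, 0, 0)"
  by (cases p) simp

lemma tsmult_1: "tsmult 1 p = p"
  by (cases p) simp

lemma tsmult_tsmult: "tsmult h (tsmult k p) = tsmult (h * k) p"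
  by (cases p) (simp add: mult.assoc)

lemma cross_tsmult_left: "cross (tsmult h p) q = tsmult h (cross p q)"
  by (cases p, cases q) (simp add: algebra_simps)

lemma cross_diff_tsmult_self: "cross p (q - tsmult h p) = cross p q"
  by (cases p, cases q) (simp add: algebra_simps)

lemma dot_tsmult: "dot p (tsmult h e) = h * dot p e"
  by (cases p, cases e) (simp add: algebra_simps)

lemma dot_diff_tsmult: "dot p (f - tsmult h e) = dot p f - h * dot p e"
  by (cases p, cases f, cases e) (simp add: algebra_simps)

lemma mem_Syz_cross:
  assumes "cross p q = (a, b, c)"
  shows "p \<in> Syz a b c"
proof -
  obtain p1 p2 p3 q1 q2 q3 where pq: "p = (p1, p2, p3)" "q = (q1, q2, q3)"
    by (cases p, cases q)
  have "p1 * (p2 * q3 - p3 * q2) + p2 * (p3 * q1 - p1 * q3) + p3 * (p1 * q2 - p2 * q1) = 0"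
    by (simp add: algebra_simps)
  then show ?thesis
    using assms by (simp add: Syz_def pq)
qed

lemma cross_cross: "cross p (cross x e) = tsmult (dot p e) x - tsmult (dot p x) e"
  by (cases p, cases x, cases e) (simp add: algebra_simps)

lemma cross_deformation:
  fixes p r w :: "'b::comm_ring_1 \<times> 'b \<times> 'b"
  assumes "s' * s = 1"
  shows "cross (tsmult s' (tsmult t p + tsmult s r)) (tsmult s w - p)
           = cross p (tsmult t w + r) + tsmult s (cross r w)"
proof -
  have "cross (tsmult t p + tsmult s r) (tsmult s w - p)
      = tsmult s (cross p (tsmult t w + r) + tsmult s (cross r w))"
    by (cases p, cases r, cases w) (simp add: algebra_simps)
  then show ?thesis
    using assms by (simp add: cross_tsmult_left tsmult_tsmult tsmult_1)
qed

lemma poly_curve_line: "poly_curve (\<lambda>s. x + tsmult [:s:] v)"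
  by (cases x, cases v) (simp add: poly_curve_def poly_family_affine)

lemma poly_curve_cross:
  "poly_curve P \<Longrightarrow> poly_curve Q \<Longrightarrow> poly_curve (\<lambda>s. cross (P s) (Q s))"
  unfolding poly_curve_def cross_def by (simp add: case_prod_beta poly_family_diff poly_family_mult)

lemma degree_le_tdeg:
  "degree a \<le> tdeg (a, b, c)" "degree b \<le> tdeg (a, b, c)" "degree c \<le> tdeg (a, b, c)"
  by (simp_all add: tdeg_def)

lemma tdeg_attained:
  "(a, b, c) \<noteq> (0, 0, 0) \<Longrightarrow> \<exists>u \<in> {a, b, c}. u \<noteq> 0 \<and> degree u = tdeg (a, b, c)"
  by (cases "tdeg (a, b, c) = 0") (auto simp: tdeg_def max_def split: if_splits)

lemma tdeg_tsmult_le: "tdeg (tsmult (h :: 'a::comm_ring_1 poly) r) \<le> degree h + tdeg r"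
  by (cases r) (simp add: tdeg_le_iff degree_mult_le_add degree_le_tdeg)

lemma tdeg_tsmult_ge:
  fixes h :: "'a::idom poly"
  assumes "h \<noteq> 0" "r \<noteq> (0, 0, 0)"
  shows "degree h + tdeg r \<le> tdeg (tsmult h r)"
proof -
  obtain a b c where r: "r = (a, b, c)"
    by (cases r)
  then obtain u where "u \<in> {a, b, c}" "u \<noteq> 0" "degree u = tdeg r"
    using tdeg_attained assms(2) by blast
  then show ?thesis
    using assms(1) degree_le_tdeg[where a = "h * a" and b = "h * b" and c = "h * c"]
    by (auto simp: r degree_mult_eq)
qed

lemma tdeg_tsmult_const_le: "tdeg (tsmult [:c:] x) \<le> tdeg x"
  using tdeg_tsmult_le[of "[:c:]" x] by simp

lemma tdeg_add_le:
  fixes x y :: "'a::comm_ring_1 triple"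
  shows "tdeg x \<le> k \<Longrightarrow> tdeg y \<le> k \<Longrightarrow> tdeg (x + y) \<le> k"
  by (cases x, cases y) (simp add: tdeg_le_iff degree_add_le)

lemma tdeg_diff_le:
  fixes x y :: "'a::comm_ring_1 triple"
  shows "tdeg x \<le> k \<Longrightarrow> tdeg y \<le> k \<Longrightarrow> tdeg (x - y) \<le> k"
  by (cases x, cases y) (simp add: tdeg_le_iff degree_diff_le)

lemma tdeg_line_le:
  fixes x y :: "'a::comm_ring_1 triple"
  assumes "tdeg x \<le> k" "tdeg y \<le> k"
  shows "tdeg (x + tsmult [:s:] (y - x)) \<le> k"
  using assms tdeg_tsmult_const_le[of s "y - x"] tdeg_diff_le[OF assms(2,1)]
  by (intro tdeg_add_le) simp_all

lemma cross_mem_Kn3: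
  fixes p q :: "'a::comm_ring_1 triple"
  assumes "tdeg p \<le> m" "tdeg q \<le> k"
  shows "cross p q \<in> Kn3 (m + k)"
  using assms
  by (cases p, cases q) (simp add: tdeg_le_iff Kn3_def degree_diff_le degree_mult_le_add)

definition coeff_triple :: "'a::zero triple \<Rightarrow> nat \<Rightarrow> 'a \<times> 'a \<times> 'a" where
  "coeff_triple x i = (coeff (fst x) i, coeff (fst (snd x)) i, coeff (snd (snd x)) i)"

lemma coeff_mult_at_degree_bound:
  fixes p q :: "'a::comm_ring_1 poly"
  assumes "degree p \<le> i" "degree q \<le> k"
  shows "coeff (p * q) (i + k) = coeff p i * coeff q k"
proof (cases "degree p = i \<and> degree q = k")
  case True
  then show ?thesis
    using coeff_mult_degree_sum[of p q] by simp
next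
  case False
  then have "coeff p i = 0 \<or> coeff q k = 0"
    using assms by (auto intro: coeff_eq_0)
  moreover have "degree (p * q) < i + k"
    using False assms degree_mult_le[of p q] by linarith
  ultimately show ?thesis
    by (auto intro: coeff_eq_0)
qed

lemma coeff_triple_cross:
  fixes p q :: "'a::comm_ring_1 triple"
  assumes "tdeg p \<le> i" "tdeg q \<le> k"
  shows "coeff_triple (cross p q) (i + k) = cross (coeff_triple p i) (coeff_triple q k)"
  using assms
  by (cases p, cases q) (simp add: coeff_triple_def tdeg_le_iff coeff_mult_at_degree_bound)

lemma cross_eq_0_imp_multiple:
  fixes u v :: "'a::field \<times> 'a \<times> 'a"
  assumes "cross u v = (0, 0, 0)" "u \<noteq> (0, 0, 0)"
  shows "\<exists>l. v = tsmult l u"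
proof -
  obtain u1 u2 u3 v1 v2 v3 where uv: "u = (u1, u2, u3)" "v = (v1, v2, v3)"
    by (cases u, cases v)
  consider "u1 \<noteq> 0" | "u2 \<noteq> 0" | "u3 \<noteq> 0"
    using assms(2) uv by auto
  then show ?thesis
  proof cases
    case 1
    then show ?thesis
      using assms(1) uv by (intro exI[of _ "v1 / u1"]) (auto simp: field_simps)
  next
    case 2
    then show ?thesis
      using assms(1) uv by (intro exI[of _ "v2 / u2"]) (auto simp: field_simps)
  next
    case 3
    then show ?thesis
      using assms(1) uv by (intro exI[of _ "v3 / u3"]) (auto simp: field_simps)
  qed
qed

lemma coeff_triple_tdeg_nonzero:
  fixes p :: "'a::zero triple"
  assumes "p \<noteq> (0, 0, 0)"
  shows "coeff_triple p (tdeg p) \<noteq> (0, 0, 0)"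
proof -
  obtain a b c where p: "p = (a, b, c)"
    by (cases p)
  then obtain u where "u \<in> {a, b, c}" "coeff u (tdeg p) \<noteq> 0"
    using tdeg_attained assms leading_coeff_0_iff by metis
  then show ?thesis
    by (auto simp: p coeff_triple_def)
qed

lemma degree_less_if_coeff_eq_0:
  "degree p \<le> k \<Longrightarrow> coeff p k = 0 \<Longrightarrow> 0 < k \<Longrightarrow> degree p < k"
  by (cases "p = 0") (auto simp: le_less)

lemma tdeg_less_if_coeff_triple_eq_0:
  "tdeg x \<le> k \<Longrightarrow> coeff_triple x k = (0, 0, 0) \<Longrightarrow> 0 < k \<Longrightarrow> tdeg x < k"
  by (cases x) (simp add: coeff_triple_def tdeg_le_iff tdeg_def degree_less_if_coeff_eq_0)

section \<open>Mu-bases\<close>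

lemma cross_reduce_step:
  fixes p q :: "'a::field triple"
  assumes p: "p \<noteq> (0, 0, 0)" and "2 * tdeg p \<le> n" "cross p q \<in> Kn3 n" "n - tdeg p < tdeg q"
  obtains q' where "cross p q' = cross p q" "tdeg q' < tdeg q"
proof -
  define i D where "i = tdeg p" and "D = tdeg q"
  have iD: "i < D" "n < i + D"
    using assms(2,4) unfolding i_def D_def by linarith+
  have "coeff_triple (cross p q) (i + D) = (0, 0, 0)"
    using assms(3) iD(2) by (cases "cross p q") (simp add: coeff_triple_def Kn3_def coeff_eq_0)
  then have "cross (coeff_triple p i) (coeff_triple q D) = (0, 0, 0)"
    using coeff_triple_cross[of p i q D] by (simp add: i_def D_def)
  then obtain l where l: "coeff_triple q D = tsmult l (coeff_triple p i)"
    using cross_eq_0_imp_multiple coeff_triple_tdeg_nonzero[OF p] unfolding i_def by blast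
  define q' where "q' = q - tsmult (monom l (D - i)) p"
  have "cross p q' = cross p q"
    by (simp add: q'_def cross_diff_tsmult_self)
  moreover have "tdeg q' < D"
  proof (rule tdeg_less_if_coeff_triple_eq_0)
    have "tdeg (tsmult (monom l (D - i)) p) \<le> D"
      using tdeg_tsmult_le[of "monom l (D - i)" p] degree_monom_le[of l "D - i"] iD(1)
      unfolding i_def by linarith
    then show "tdeg q' \<le> D"
      unfolding q'_def D_def by (intro tdeg_diff_le) simp_all
    show "coeff_triple q' D = (0, 0, 0)"
      using l iD(1) by (cases p, cases q) (simp add: q'_def coeff_triple_def coeff_monom_mult)
  qed (use iD in simp)
  ultimately show thesis
    using that unfolding D_def by blast
qed

lemma cross_reduce:
  fixes p q :: "'a::field triple"
  assumes "p \<noteq> (0, 0, 0)" "2 * tdeg p \<le> n" "cross p q \<in> Kn3 n"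
  shows "\<exists>q'. cross p q' = cross p q \<and> tdeg q' \<le> n - tdeg p"
  using assms(3)
proof (induction "tdeg q" arbitrary: q rule: less_induct)
  case less
  show ?case
  proof (cases "tdeg q \<le> n - tdeg p")
    case False
    then have "n - tdeg p < tdeg q"
      by simp
    then obtain q' where q': "cross p q' = cross p q" "tdeg q' < tdeg q"
      by (rule cross_reduce_step[OF assms(1,2) less.prems])
    then obtain q'' where "cross p q'' = cross p q'" "tdeg q'' \<le> n - tdeg p"
      using less.hyps[of q'] less.prems by auto
    then show ?thesis
      using q'(1) by (intro exI[of _ q'']) simp
  qed blast
qed

(* The combinations dot p e form an ideal; one of least degree divides all of them. *)
lemma dot_least_degree_dvd:
  fixes p :: "'a::field triple"
  assumes "p \<noteq> (0, 0, 0)"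
  shows "\<exists>e. dot p e \<noteq> 0 \<and> (\<forall>f. dot p e dvd dot p f)"
proof -
  obtain p1 p2 p3 where p: "p = (p1, p2, p3)"
    by (cases p)
  have "dot p (1, 0, 0) = p1" "dot p (0, 1, 0) = p2" "dot p (0, 0, 1) = p3"
    by (simp_all add: p)
  then have "\<exists>e. dot p e \<noteq> 0"
    using assms p by metis
  then obtain e where e: "dot p e \<noteq> 0" "\<And>f. dot p f \<noteq> 0 \<Longrightarrow> degree (dot p e) \<le> degree (dot p f)"
    using ex_has_least_nat[of "\<lambda>e. dot p e \<noteq> 0" _ "\<lambda>e. degree (dot p e)"] by blast
  have "dot p e dvd dot p f" for f
  proof -
    have "dot p f mod dot p e = dot p (f - tsmult (dot p f div dot p e) e)"
      by (simp add: dot_diff_tsmult minus_div_mult_eq_mod)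
    then have "dot p f mod dot p e = 0"
      using e degree_mod_less'[OF e(1)] by (metis not_le)
    then show ?thesis
      by (simp add: mod_eq_0_iff_dvd)
  qed
  then show ?thesis
    using e(1) by blast
qed

lemma dot_eq_1_if_coprime3:
  fixes p1 p2 p3 :: "'a::field poly"
  assumes "coprime3 p1 p2 p3"
  obtains e where "dot (p1, p2, p3) e = 1"
proof -
  have "(p1, p2, p3) \<noteq> (0, 0, 0)"
  proof
    assume "(p1, p2, p3) = (0, 0, 0)"
    then have "is_unit (0 :: 'a poly)"
      using assms unfolding coprime3_def by simp
    then show False
      by simp
  qed
  then obtain e where e: "dot (p1, p2, p3) e \<noteq> 0" "\<And>f. dot (p1, p2, p3) e dvd dot (p1, p2, p3) f"
    using dot_least_degree_dvd by blast
  then have "is_unit (dot (p1, p2, p3) e)"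
    using assms e(2)[of "(1, 0, 0)"] e(2)[of "(0, 1, 0)"] e(2)[of "(0, 0, 1)"]
    by (simp add: coprime3_def)
  then obtain h where "1 = dot (p1, p2, p3) e * h"
    by (rule dvdE)
  then have "dot (p1, p2, p3) (tsmult h e) = 1"
    by (simp add: dot_tsmult mult.commute)
  then show thesis
    by (rule that)
qed

lemma coprime3_minimal_syz:
  fixes p1 p2 p3 :: "'a::field poly"
  assumes "(p1, p2, p3) \<in> Syz a b c - {(0, 0, 0)}" "tdeg (p1, p2, p3) = mu a b c"
  shows "coprime3 p1 p2 p3"
  unfolding coprime3_def
proof (intro allI impI)
  fix d assume "d dvd p1 \<and> d dvd p2 \<and> d dvd p3"
  then obtain r1 r2 r3 where r: "(p1, p2, p3) = tsmult d (r1, r2, r3)"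
    by (auto elim!: dvdE)
  then have "d \<noteq> 0" "(r1, r2, r3) \<noteq> (0, 0, 0)"
    using assms(1) by auto
  moreover have "d * (r1 * a + r2 * b + r3 * c) = 0"
    using assms(1) r by (simp add: Syz_def algebra_simps)
  ultimately have "mu a b c \<le> tdeg (r1, r2, r3)"
    by (intro mu_le) (simp_all add: Syz_def)
  then have "degree d = 0"
    using tdeg_tsmult_ge[OF \<open>d \<noteq> 0\<close> \<open>(r1, r2, r3) \<noteq> (0, 0, 0)\<close>] r assms(2) by simp
  then show "is_unit d"
    using \<open>d \<noteq> 0\<close> is_unit_iff_degree by blast
qed

lemma mu_basis:
  fixes a b c :: "'a::field poly"
  assumes "(a, b, c) \<in> Pn n" "2 * mu a b c \<le> n"
  obtains p q where "cross p q = (a, b, c)" "tdeg p = mu a b c" "tdeg q \<le> n - mu a b c"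
proof -
  have "c \<noteq> 0" "(a, b, c) \<in> Kn3 n"
    using assms(1) Pn_subset_Kn3 by (auto simp: Pn_def)
  obtain s where s: "s \<in> Syz a b c - {(0, 0, 0)}" "tdeg s = mu a b c"
    using mu_attained[OF \<open>c \<noteq> 0\<close>] by blast
  obtain p1 p2 p3 where "s = (p1, p2, p3)"
    by (cases s)
  with s have p: "(p1, p2, p3) \<in> Syz a b c - {(0, 0, 0)}" "tdeg (p1, p2, p3) = mu a b c"
    by simp_all
  obtain e where "dot (p1, p2, p3) e = 1"
    using dot_eq_1_if_coprime3[OF coprime3_minimal_syz[OF p]] .
  moreover have "dot (p1, p2, p3) (a, b, c) = 0"
    using p(1) by (simp add: Syz_def)
  ultimately have eq: "cross (p1, p2, p3) (cross (a, b, c) e) = (a, b, c)"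
    by (simp add: cross_cross tsmult_0)
  have "\<exists>q. cross (p1, p2, p3) q = cross (p1, p2, p3) (cross (a, b, c) e) \<and> tdeg q \<le> n - mu a b c"
    using p assms(2) \<open>(a, b, c) \<in> Kn3 n\<close>
    by (intro cross_reduce[of "(p1, p2, p3)", unfolded p(2)]) (simp_all add: eq)
  then show thesis
    using that[of "(p1, p2, p3)"] p(2) unfolding eq by blast
qed

section \<open>Generic points of class mu\<close>

lemma monom_mult_add_eq_0_iff:
  fixes u v :: "'a::idom poly"
  assumes "degree u < k"
  shows "monom 1 k * v + u = 0 \<longleftrightarrow> v = 0 \<and> u = 0"
proof (cases "v = 0")
  case False
  then have "degree u < degree (monom 1 k * v)"
    using assms by (simp add: degree_mult_eq degree_monom_eq)
  then have "degree (monom 1 k * v + u) = degree (monom 1 k * v)"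
    by (rule degree_add_eq_left)
  then have "monom 1 k * v + u \<noteq> 0"
    using \<open>degree u < degree (monom 1 k * v)\<close> by auto
  then show ?thesis
    using False by simp
qed simp

lemma no_syz_2_monom:
  fixes z :: "'a::field poly"
  assumes "n \<ge> 1"
  shows "\<not> has_syz (n - 1) 2 (component (monom 1 n, 1, z))"
proof
  assume "has_syz (n - 1) 2 (component (monom 1 n, 1, z))"
  then obtain A B :: "'a poly" where "(A, B) \<noteq> (0, 0)" "degree B \<le> n - 1" "A * monom 1 n + B = 0"
    unfolding has_syz_2_iff by auto
  moreover have "degree B < n"
    using calculation(2) assms by linarith
  ultimately show False
    using monom_mult_add_eq_0_iff[of B n A] by (simp add: mult.commute)
qed

lemma no_syz_3_monom:
  fixes n m :: nat
  assumes "0 < m" "2 * m \<le> n"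
  shows "\<not> has_syz (m - 1) 3 (component (monom 1 n, 1, monom (1 :: 'a::field) m))"
proof
  assume "has_syz (m - 1) 3 (component (monom 1 n, 1, monom (1 :: 'a) m))"
  then obtain s where s: "s \<in> Syz (monom 1 n) 1 (monom (1 :: 'a) m) - {(0, 0, 0)}" "tdeg s \<le> m - 1"
    unfolding has_syz_3_iff by blast
  obtain A B C :: "'a poly" where "s = (A, B, C)"
    by (cases s)
  with s have "(A, B, C) \<noteq> (0, 0, 0)"
    and deg: "degree A \<le> m - 1" "degree B \<le> m - 1" "degree C \<le> m - 1"
    and "A * monom 1 n + B * 1 + C * monom 1 m = 0"
    by (simp_all add: Syz_def tdeg_le_iff)
  moreover have "degree B < m" "degree C < m"
    using deg assms(1) by linarith+
  moreover have "degree (monom 1 m * C + B) < n"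
    using calculation assms(2) degree_mult_le[of "monom 1 m" C] degree_monom_le[of "1 :: 'a" m]
    by (intro degree_add_less) linarith+
  ultimately show False
    using monom_mult_add_eq_0_iff[of "monom 1 m * C + B" n A] monom_mult_add_eq_0_iff[of B m C]
    by (simp add: algebra_simps)
qed

lemma coprime3_if_no_syz:
  fixes a b c :: "'a::field poly"
  assumes "degree a \<le> n" "degree b \<le> n" "\<not> has_syz (n - 1) 2 (component (a, b, c))"
  shows "coprime3 a b c"
  unfolding coprime3_def
proof (intro allI impI)
  fix d assume d: "d dvd a \<and> d dvd b \<and> d dvd c"
  show "is_unit d"
  proof (cases "a = 0 \<and> b = 0")
    case True
    then have "has_syz (n - 1) 2 (component (a, b, c))"
      unfolding has_syz_2_iff by (intro exI[of _ 1] exI[of _ 0]) simp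
    then show ?thesis
      using assms(3) by blast
  next
    case False
    then have "d \<noteq> 0"
      using d by auto
    obtain a' b' where ab: "a = d * a'" "b = d * b'"
      using d by (auto elim!: dvdE)
    show ?thesis
    proof (rule ccontr)
      assume "\<not> is_unit d"
      then have "0 < degree d"
        using \<open>d \<noteq> 0\<close> is_unit_iff_degree by blast
      have deg: "degree u \<le> n - 1" if "degree (d * u) \<le> n" for u
        using that \<open>0 < degree d\<close> \<open>d \<noteq> 0\<close> by (cases "u = 0") (auto simp: degree_mult_eq)
      have "(b', - a') \<noteq> (0, 0)"
        using False ab by auto
      moreover have "b' * a + - a' * b = 0"
        using ab by (simp add: algebra_simps)
      ultimately have "has_syz (n - 1) 2 (component (a, b, c))"
        unfolding has_syz_2_iff using deg ab assms(1,2)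
        by (intro exI[of _ b'] exI[of _ "- a'"]) simp
      then show False
        using assms(3) by blast
    qed
  qed
qed

lemma cross_mem_Pmu:
  fixes p q :: "'a::field triple"
  assumes "tdeg p \<le> m" "tdeg q \<le> n - m" "m \<le> n"
    and "coeff (component (cross p q) 0) n \<noteq> 0" "component (cross p q) 2 \<noteq> 0"
    and "\<not> has_syz (n - 1) 2 (component (cross p q))"
    and "0 < m \<Longrightarrow> \<not> has_syz (m - 1) 3 (component (cross p q))"
  shows "cross p q \<in> Pmu n m"
proof -
  obtain a b c where abc: "cross p q = (a, b, c)"
    by (cases "cross p q")
  have "(a, b, c) \<in> Kn3 n"
    using cross_mem_Kn3[OF assms(1,2)] assms(3) abc by simp
  then have deg: "degree a \<le> n" "degree b \<le> n" "degree c \<le> n"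
    by (simp_all add: Kn3_def)
  have "coeff a n \<noteq> 0" "c \<noteq> 0"
    using assms(4,5) abc by simp_all
  then have "degree a = n"
    using deg(1) le_degree by (metis le_antisym)
  moreover have "coprime3 a b c"
    using coprime3_if_no_syz[OF deg(1,2)] assms(6) abc by simp
  moreover have "p \<noteq> (0, 0, 0)"
    using \<open>coeff a n \<noteq> 0\<close> abc by (cases q) auto
  then have "mu a b c \<le> m"
    using mu_le[OF mem_Syz_cross[OF abc]] assms(1) by simp
  moreover have "m \<le> mu a b c"
  proof (cases "m = 0")
    case False
    then have "\<not> mu a b c \<le> m - 1"
      using assms(7) abc mu_le_iff_has_syz[OF \<open>c \<noteq> 0\<close>] by simp
    then show ?thesis
      by simp
  qed simp
  ultimately show ?thesis
    using \<open>c \<noteq> 0\<close> deg abc by (simp add: Pmu_def Pn_def)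
qed

lemma cofinite_Pmu_on_curve:
  fixes Y :: "'a::field \<Rightarrow> 'a triple"
  assumes "n \<ge> 1" "2 * m \<le> n" "poly_curve Y" "Y s0 = (monom 1 n, 1, monom 1 m)"
    and cross: "\<And>s. \<exists>p q. Y s = cross p q \<and> tdeg p \<le> m \<and> tdeg q \<le> n - m"
  shows "finite {s. Y s \<notin> Pmu n m}"
proof -
  have in_Kn3: "Y s \<in> Kn3 n" for s
  proof -
    obtain p q where "Y s = cross p q" "tdeg p \<le> m" "tdeg q \<le> n - m"
      using cross by blast
    then show ?thesis
      using cross_mem_Kn3[of p m q "n - m"] assms(2) by simp
  qed
  have finite_bad: "finite {s. Y s \<in> B}" if "zariski_closed n B" "Y s0 \<notin> B" for B
    using finite_curve_in_closed[OF that(1) assms(3) in_Kn3 that(2)] .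
  let ?B1 = "{x \<in> Kn3 n. coeff (component x 0) n = 0}"
  let ?B2 = "{x \<in> Kn3 n. coeff (component x 2) m = 0}"
  let ?B3 = "{x \<in> Kn3 n. has_syz (n - 1) 2 (component x)}"
  let ?B4 = "{x \<in> Kn3 n. has_syz (m - 1) 3 (component x)}"
  define E where "E = {s. Y s \<in> ?B1} \<union> {s. Y s \<in> ?B2} \<union> {s. Y s \<in> ?B3} \<union> {s. 0 < m \<and> Y s \<in> ?B4}"
  have "Y s \<in> Pmu n m" if "s \<notin> E" for s
  proof -
    obtain p q where pq: "Y s = cross p q" "tdeg p \<le> m" "tdeg q \<le> n - m"
      using cross by blast
    have Ys: "coeff (component (Y s) 0) n \<noteq> 0" "coeff (component (Y s) 2) m \<noteq> 0"
      "\<not> has_syz (n - 1) 2 (component (Y s))" "0 < m \<Longrightarrow> \<not> has_syz (m - 1) 3 (component (Y s))"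
      using that in_Kn3[of s] by (simp_all add: E_def)
    moreover have "component (Y s) 2 \<noteq> 0"
      using Ys(2) by (metis coeff_0)
    moreover have "m \<le> n"
      using assms(2) by linarith
    ultimately show ?thesis
      unfolding pq(1) by (intro cross_mem_Pmu pq(2,3)) (simp_all only: not_False_eq_True)
  qed
  then have "{s. Y s \<notin> Pmu n m} \<subseteq> E"
    by blast
  moreover have "finite {s. Y s \<in> ?B1}" "finite {s. Y s \<in> ?B2}"
    by (rule finite_bad[OF zariski_closed_coeff_eq_0], simp add: assms(4))+
  moreover have "finite {s. Y s \<in> ?B3}"
    by (rule finite_bad[OF zariski_closed_has_syz])
      (use no_syz_2_monom[OF assms(1), where 'a = 'a] in \<open>simp add: assms(4)\<close>)
  moreover have "finite {s. 0 < m \<and> Y s \<in> ?B4}"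
  proof (cases "0 < m")
    case True
    have "finite {s. Y s \<in> ?B4}"
      by (rule finite_bad[OF zariski_closed_has_syz])
        (use no_syz_3_monom[OF True assms(2), where 'a = 'a] in \<open>simp add: assms(4)\<close>)
    then show ?thesis
      by (rule finite_subset[rotated]) blast
  qed simp
  ultimately show ?thesis
    unfolding E_def by (meson finite_UnI finite_subset)
qed

lemma cross_mem_closed_if_Pmu_subset:
  fixes Z :: "'a::alg_closed_field triple set"
  assumes "n \<ge> 1" "2 * m \<le> n" "zariski_closed n Z" "Pmu n m \<subseteq> Z"
    and "tdeg p \<le> m" "tdeg q \<le> n - m"
  shows "cross p q \<in> Z"
proof -
  (* p0 x q0 = (t^n, 1, t^m) is a point of class m *)
  define p0 q0 :: "'a triple" where "p0 = (0, monom 1 m, -1)" and "q0 = (-1, 0, monom 1 (n - m))"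
  define P Q where "P s = p0 + tsmult [:s:] (p - p0)" and "Q s = q0 + tsmult [:s:] (q - q0)" for s
  have "tdeg p0 \<le> m" "tdeg q0 \<le> n - m"
    by (simp_all add: p0_def q0_def tdeg_le_iff degree_monom_le)
  then have deg: "tdeg (P s) \<le> m" "tdeg (Q s) \<le> n - m" for s
    using assms(5,6) by (simp_all add: P_def Q_def tdeg_line_le)
  have curve: "poly_curve (\<lambda>s. cross (P s) (Q s))"
    unfolding P_def Q_def by (intro poly_curve_cross poly_curve_line)
  have "cross (P 0) (Q 0) = (monom 1 n, 1, monom 1 m)"
    using assms(2) by (cases p, cases q) (simp add: P_def Q_def p0_def q0_def mult_monom)
  then have "finite {s. cross (P s) (Q s) \<notin> Pmu n m}"
    using deg by (intro cofinite_Pmu_on_curve[OF assms(1,2) curve]) blast+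
  then have "finite {s. cross (P s) (Q s) \<notin> Z}"
    by (rule finite_subset[rotated]) (use assms(4) in blast)
  moreover have "cross (P 1) (Q 1) \<in> Kn3 n"
    using cross_mem_Kn3[OF deg] assms(2) by simp
  ultimately have "cross (P 1) (Q 1) \<in> Z"
    using curve_in_closed[OF alg_closed_field_infinite assms(3) curve] by blast
  moreover have "cross (P 1) (Q 1) = cross p q"
    by (cases p, cases q) (simp add: P_def Q_def p0_def q0_def)
  ultimately show ?thesis
    by simp
qed

section \<open>Degeneration to lower class\<close>

lemma monom_mult_poly_shift_add_cutoff:
  fixes u :: "'a::comm_semiring_1 poly"
  shows "monom 1 e * poly_shift e u + poly_cutoff e u = u"
  by (rule poly_eqI) (simp add: coeff_monom_mult coeff_poly_shift coeff_poly_cutoff)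

lemma degree_poly_shift_le: "degree u \<le> N \<Longrightarrow> degree (poly_shift e u) \<le> N - e"
  by (rule degree_le) (simp add: coeff_poly_shift coeff_eq_0)

lemma degree_poly_cutoff_le: "degree (poly_cutoff e u) \<le> e"
  by (rule degree_le) (simp add: coeff_poly_cutoff)

lemma line_of_cross_products:
  fixes p q :: "'a::field triple"
  assumes "2 * m \<le> n" "i \<le> m" "tdeg p \<le> i" "tdeg q \<le> n - i"
  shows "\<exists>v. \<forall>s. s \<noteq> 0 \<longrightarrow>
           (\<exists>p' q'. cross p q + tsmult [:s:] v = cross p' q' \<and> tdeg p' \<le> m \<and> tdeg q' \<le> n - m)"
proof -
  define e where "e = m - i"
  obtain q1 q2 q3 where q: "q = (q1, q2, q3)"
    by (cases q)
  define w r where "w = (poly_shift e q1, poly_shift e q2, poly_shift e q3)"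
    and "r = (poly_cutoff e q1, poly_cutoff e q2, poly_cutoff e q3)"
  have q_eq: "q = tsmult (monom 1 e) w + r"
    by (simp add: q w_def r_def monom_mult_poly_shift_add_cutoff)
  have "tdeg w \<le> n - m"
    using assms(1,2,4) degree_poly_shift_le[of q1 "n - i" e] degree_poly_shift_le[of q2 "n - i" e]
      degree_poly_shift_le[of q3 "n - i" e]
    by (simp add: q w_def e_def tdeg_le_iff)
  have "tdeg r \<le> e"
    by (simp add: r_def tdeg_le_iff degree_poly_cutoff_le)
  have "cross p q + tsmult [:s:] (cross r w) =
      cross (tsmult [:inverse s:] (tsmult (monom 1 e) p + tsmult [:s:] r)) (tsmult [:s:] w - p)"
    if "s \<noteq> 0" for s
  proof -
    have "[:inverse s:] * [:s:] = 1"
      using that by simp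
    then show ?thesis
      unfolding q_eq by (rule cross_deformation[symmetric])
  qed
  moreover have "tdeg (tsmult [:inverse s:] (tsmult (monom 1 e) p + tsmult [:s:] r)) \<le> m" for s
  proof -
    have "tdeg (tsmult (monom 1 e) p) \<le> m"
      using tdeg_tsmult_le[of "monom 1 e" p] degree_monom_le[of "1 :: 'a" e] assms(2,3)
      unfolding e_def by linarith
    moreover have "tdeg (tsmult [:s:] r) \<le> m"
      using tdeg_tsmult_const_le[of s r] \<open>tdeg r \<le> e\<close> unfolding e_def by linarith
    ultimately have "tdeg (tsmult (monom 1 e) p + tsmult [:s:] r) \<le> m"
      by (rule tdeg_add_le)
    then show ?thesis
      by (rule order_trans[OF tdeg_tsmult_const_le])
  qed
  moreover have "tdeg (tsmult [:s:] w - p) \<le> n - m" for s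
    using tdeg_tsmult_const_le[of s w] \<open>tdeg w \<le> n - m\<close> assms(1-3)
    by (intro tdeg_diff_le) linarith+
  ultimately show ?thesis
    by blast
qed

lemma cross_mem_closed_of_lower_degree:
  fixes Z :: "'a::alg_closed_field triple set"
  assumes "zariski_closed n Z" "2 * m \<le> n" "i \<le> m"
    and cross_mem: "\<And>p q. tdeg p \<le> m \<Longrightarrow> tdeg q \<le> n - m \<Longrightarrow> cross p q \<in> Z"
    and "tdeg p \<le> i" "tdeg q \<le> n - i"
  shows "cross p q \<in> Z"
proof -
  obtain v where v: "\<And>s. s \<noteq> 0 \<Longrightarrow>
      \<exists>p' q'. cross p q + tsmult [:s:] v = cross p' q' \<and> tdeg p' \<le> m \<and> tdeg q' \<le> n - m"
    using line_of_cross_products[OF assms(2,3,5,6)] by blast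
  define X where "X s = cross p q + tsmult [:s:] v" for s
  have "X s \<in> Z" if s: "s \<noteq> 0" for s
  proof -
    obtain p' q' where "X s = cross p' q'" "tdeg p' \<le> m" "tdeg q' \<le> n - m"
      using v[OF s] unfolding X_def by blast
    then show ?thesis
      using cross_mem by simp
  qed
  then have "{s. X s \<notin> Z} \<subseteq> {0}"
    by blast
  then have "finite {s. X s \<notin> Z}"
    by (rule finite_subset) simp
  moreover have "poly_curve X"
    unfolding X_def by (rule poly_curve_line)
  moreover have "X 0 = cross p q"
    by (cases "cross p q") (simp add: X_def tsmult_0)
  moreover have "cross p q \<in> Kn3 n"
    using cross_mem_Kn3[OF assms(5,6)] assms(2,3) by simp
  ultimately show ?thesis
    using curve_in_closed[OF alg_closed_field_infinite assms(1)] by metis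
qed

lemma Pmu_subset_zariski_closure:
  assumes "n \<ge> 1" "2 * m \<le> n" "i \<le> m"
  shows "Pmu n i \<subseteq> zariski_closure_in n (Pn n :: 'a::alg_closed_field triple set) (Pmu n m)"
proof
  fix y :: "'a triple"
  assume "y \<in> Pmu n i"
  then obtain a b c where y: "y = (a, b, c)" "(a, b, c) \<in> Pn n" "mu a b c = i"
    by (auto simp: Pmu_def)
  have "2 * mu a b c \<le> n"
    using y(3) assms(2,3) by linarith
  then obtain p q where pq: "cross p q = y" "tdeg p = i" "tdeg q \<le> n - i"
    unfolding y(1) y(3)[symmetric] by (rule mu_basis[OF y(2)])
  have "y \<in> Z" if Z: "zariski_closed n Z" "Pmu n m \<subseteq> Z" for Z :: "'a triple set"
  proof -
    have "cross p q \<in> Z"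
      using cross_mem_closed_of_lower_degree[OF Z(1) assms(2,3)
          cross_mem_closed_if_Pmu_subset[OF assms(1,2) Z]] pq(2,3)
      by simp
    then show ?thesis
      unfolding pq(1) .
  qed
  then show "y \<in> zariski_closure_in n (Pn n) (Pmu n m)"
    using y(1,2) by (auto intro: mem_zariski_closure_inI)
qed

theorem mainTheorem2:
  fixes n m :: nat
  assumes "n \<ge> 1" and "m \<le> n div 2"
  shows "zariski_closure_in n (Pn n :: 'a::alg_closed_field triple set) (Pmu n m)
           = (\<Union>i \<in> {0..m}. Pmu n i)"
proof
  show "zariski_closure_in n (Pn n) (Pmu n m) \<subseteq> (\<Union>i \<in> {0..m}. Pmu n i)"
    by (rule zariski_closure_Pmu_subset)
next
  have "2 * m \<le> n"
    using assms(2) by linarith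
  then show "(\<Union>i \<in> {0..m}. Pmu n i) \<subseteq> zariski_closure_in n (Pn n :: 'a triple set) (Pmu n m)"
    using Pmu_subset_zariski_closure[OF assms(1)] by (intro UN_least) simp
qed

end
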